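(* Let $C=(C_1,C_0,s,t,\varepsilon,m)$ be an internal category in $\mathsf{XMod}$ with $C_1=(A_1,B_1,\alpha_1)$, $C_0=(A_0,B_0,\alpha_0)$. Put $L=\ker s_A$, $M=\ker s_B$, $N=A_0$, $P=B_0$, $\lambda=\alpha_1|_{L}:L\to M$, $\lambda'=t_A|_{L}:L\to N$, $\mu=t_B|_{M}:M\to P$, $\nu=\alpha_0:N\to P$. Let $P$ act on $N$ by the given action of $B_0$ on $A_0$, on $M$ by $p\cdot m=1_p+m-1_p$, and on $L$ by $p\cdot l=1_p\cdot l$ (action of $B_1$ on $A_1$). Define $h:M\times N\to L$ by $h(m,n)=m\cdot 1_n-1_n$, where $m\cdot 1_n$ is the action of $m\in B_1$ on $1_n\in A_1$. Then $(L,M,N,P)$ with these data is a crossed square.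
   Context: Groups are written additively. A crossed module $(A,B,\alpha)$: groups $A,B$, a left action of $B$ on $A$ by automorphisms, a homomorphism $\alpha:A\to B$ with $\alpha(b\cdot a)=b+\alpha(a)-b$ and $\alpha(a)\cdot a'=a+a'-a$. Morphisms $\langle f_A,f_B\rangle$ are pairs of homomorphisms with $f_B\alpha=\alpha'f_A$, $f_A(b\cdot a)=f_B(b)\cdot f_A(a)$. An internal category in $\mathsf{XMod}$ consists of crossed modules $C_1=(A_1,B_1,\alpha_1)$, $C_0=(A_0,B_0,\alpha_0)$ and crossed module morphisms $s=\langle s_A,s_B\rangle, t=\langle t_A,t_B\rangle:C_1\to C_0$, $\varepsilon=\langle\varepsilon_A,\varepsilon_B\rangle:C_0\to C_1$, $m=\langle m_A,m_B\rangle:C_1\,{}_s\!\times_t C_1\to C_1$ (pullback computed componentwise, pairs $(x,y)$ with $s(x)=t(y)$, componentwise action) satisfying $s\varepsilon=t\varepsilon=1$, $sm=s\pi_2$, $tm=t\pi_1$, associativity $m(1\times m)=m(m\times1)$ and unit laws $m(\varepsilon s,1)=m(1,\varepsilon t)=1$. Notation: $1_x=\varepsilon_A(x)$ or $\varepsilon_B(x)$. A crossed square: homomorphisms $\lambda:L\to M$, $\lambda':L\to N$, $\mu:M\to P$, $\nu:N\to P$ with $\nu\lambda'=\mu\lambda$, left actions of $P$ on $L,M,N$ (inducing actions of $M$ on $L,N$ via $\mu$ and of $N$ on $L,M$ via $\nu$), and $h:M\times N\to L$, such that (i) $\lambda,\lambda'$ are $P$-equivariant and $\mu$, $\nu$,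 $\mu\lambda$ are crossed modules; (ii) $\lambda h(m,n)=m+n\cdot(-m)$, $\lambda'h(m,n)=m\cdot n-n$; (iii) $h(\lambda(l),n)=l+n\cdot(-l)$, $h(m,\lambda'(l))=m\cdot l-l$; (iv) $h(m+m',n)=m\cdot h(m',n)+h(m,n)$, $h(m,n+n')=h(m,n)+n\cdot h(m,n')$; (v) $h(p\cdot m,p\cdot n)=p\cdot h(m,n)$. *)

theory Defs
  imports "HOL-Algebra.Algebra"
begin

(* Groups are HOL-Algebra groups; the paper's additive "+" is written \<otimes>,
   "-x" is inv x, 0 is \<one>. *)

definition group_action ::
  "('b, 'm) monoid_scheme \<Rightarrow> ('a, 'n) monoid_scheme \<Rightarrow> ('b \<Rightarrow> 'a \<Rightarrow> 'a) \<Rightarrow> bool" where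
  "group_action B A act \<longleftrightarrow> group B \<and> group A \<and>
     (\<forall>b \<in> carrier B. act b \<in> hom A A \<and> bij_betw (act b) (carrier A) (carrier A)) \<and>
     (\<forall>a \<in> carrier A. act \<one>\<^bsub>B\<^esub> a = a) \<and>
     (\<forall>b \<in> carrier B. \<forall>b' \<in> carrier B. \<forall>a \<in> carrier A.
        act (b \<otimes>\<^bsub>B\<^esub> b') a = act b (act b' a))"

definition crossed_module ::
  "('a, 'n) monoid_scheme \<Rightarrow> ('b, 'm) monoid_scheme \<Rightarrow> ('b \<Rightarrow> 'a \<Rightarrow> 'a) \<Rightarrow> ('a \<Rightarrow> 'b) \<Rightarrow> bool" where
  "crossed_module A B act \<alpha> \<longleftrightarrow> group_action B A act \<and> \<alpha> \<in> hom A B \<and>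
     (\<forall>b \<in> carrier B. \<forall>a \<in> carrier A.
        \<alpha> (act b a) = b \<otimes>\<^bsub>B\<^esub> \<alpha> a \<otimes>\<^bsub>B\<^esub> inv\<^bsub>B\<^esub> b) \<and>
     (\<forall>a \<in> carrier A. \<forall>a' \<in> carrier A.
        act (\<alpha> a) a' = a \<otimes>\<^bsub>A\<^esub> a' \<otimes>\<^bsub>A\<^esub> inv\<^bsub>A\<^esub> a)"

definition xmod_morphism ::
  "('a, 'n) monoid_scheme \<Rightarrow> ('b, 'm) monoid_scheme \<Rightarrow> ('b \<Rightarrow> 'a \<Rightarrow> 'a) \<Rightarrow> ('a \<Rightarrow> 'b) \<Rightarrow>
   ('c, 'o) monoid_scheme \<Rightarrow> ('d, 'p) monoid_scheme \<Rightarrow> ('d \<Rightarrow> 'c \<Rightarrow> 'c) \<Rightarrow> ('c \<Rightarrow> 'd) \<Rightarrow>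
   ('a \<Rightarrow> 'c) \<Rightarrow> ('b \<Rightarrow> 'd) \<Rightarrow> bool" where
  "xmod_morphism A B act \<alpha> A' B' act' \<alpha>' fA fB \<longleftrightarrow>
     fA \<in> hom A A' \<and> fB \<in> hom B B' \<and>
     (\<forall>a \<in> carrier A. fB (\<alpha> a) = \<alpha>' (fA a)) \<and>
     (\<forall>b \<in> carrier B. \<forall>a \<in> carrier A. fA (act b a) = act' (fB b) (fA a))"

definition pb_group ::
  "('a, 'n) monoid_scheme \<Rightarrow> ('a \<Rightarrow> 'c) \<Rightarrow> ('a \<Rightarrow> 'c) \<Rightarrow> ('a \<times> 'a) monoid" where
  "pb_group G s t = (G \<times>\<times> G)\<lparr>carrier :=
      {(x, y). x \<in> carrier G \<and> y \<in> carrier G \<and> s x = t y}\<rparr>"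

definition pb_act :: "('b \<Rightarrow> 'a \<Rightarrow> 'a) \<Rightarrow> 'b \<times> 'b \<Rightarrow> 'a \<times> 'a \<Rightarrow> 'a \<times> 'a" where
  "pb_act act = (\<lambda>(b, b') (x, y). (act b x, act b' y))"

definition pb_map :: "('a \<Rightarrow> 'b) \<Rightarrow> 'a \<times> 'a \<Rightarrow> 'b \<times> 'b" where
  "pb_map f = (\<lambda>(x, y). (f x, f y))"

definition internal_cat_xmod ::
  "('a, 'n) monoid_scheme \<Rightarrow> ('b, 'm) monoid_scheme \<Rightarrow> ('b \<Rightarrow> 'a \<Rightarrow> 'a) \<Rightarrow> ('a \<Rightarrow> 'b) \<Rightarrow>
   ('c, 'o) monoid_scheme \<Rightarrow> ('d, 'p) monoid_scheme \<Rightarrow> ('d \<Rightarrow> 'c \<Rightarrow> 'c) \<Rightarrow> ('c \<Rightarrow> 'd) \<Rightarrow>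
   ('a \<Rightarrow> 'c) \<Rightarrow> ('b \<Rightarrow> 'd) \<Rightarrow> ('a \<Rightarrow> 'c) \<Rightarrow> ('b \<Rightarrow> 'd) \<Rightarrow>
   ('c \<Rightarrow> 'a) \<Rightarrow> ('d \<Rightarrow> 'b) \<Rightarrow> ('a \<times> 'a \<Rightarrow> 'a) \<Rightarrow> ('b \<times> 'b \<Rightarrow> 'b) \<Rightarrow> bool" where
  "internal_cat_xmod A1 B1 act1 \<alpha>1 A0 B0 act0 \<alpha>0 sA sB tA tB eA eB mA mB \<longleftrightarrow>
     crossed_module A1 B1 act1 \<alpha>1 \<and> crossed_module A0 B0 act0 \<alpha>0 \<and>
     xmod_morphism A1 B1 act1 \<alpha>1 A0 B0 act0 \<alpha>0 sA sB \<and>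
     xmod_morphism A1 B1 act1 \<alpha>1 A0 B0 act0 \<alpha>0 tA tB \<and>
     xmod_morphism A0 B0 act0 \<alpha>0 A1 B1 act1 \<alpha>1 eA eB \<and>
     xmod_morphism (pb_group A1 sA tA) (pb_group B1 sB tB) (pb_act act1) (pb_map \<alpha>1)
                   A1 B1 act1 \<alpha>1 mA mB \<and>
     (\<forall>x \<in> carrier A0. sA (eA x) = x \<and> tA (eA x) = x) \<and>
     (\<forall>x \<in> carrier B0. sB (eB x) = x \<and> tB (eB x) = x) \<and>
     (\<forall>x \<in> carrier A1. \<forall>y \<in> carrier A1. sA x = tA y \<longrightarrow>
        sA (mA (x, y)) = sA y \<and> tA (mA (x, y)) = tA x) \<and>
     (\<forall>x \<in> carrier B1. \<forall>y \<in> carrier B1. sB x = tB y \<longrightarrow>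
        sB (mB (x, y)) = sB y \<and> tB (mB (x, y)) = tB x) \<and>
     (\<forall>x \<in> carrier A1. \<forall>y \<in> carrier A1. \<forall>z \<in> carrier A1.
        sA x = tA y \<longrightarrow> sA y = tA z \<longrightarrow> mA (x, mA (y, z)) = mA (mA (x, y), z)) \<and>
     (\<forall>x \<in> carrier B1. \<forall>y \<in> carrier B1. \<forall>z \<in> carrier B1.
        sB x = tB y \<longrightarrow> sB y = tB z \<longrightarrow> mB (x, mB (y, z)) = mB (mB (x, y), z)) \<and>
     (\<forall>x \<in> carrier A1. mA (eA (tA x), x) = x \<and> mA (x, eA (sA x)) = x) \<and>
     (\<forall>x \<in> carrier B1. mB (eB (tB x), x) = x \<and> mB (x, eB (sB x)) = x)"

definition crossed_square ::
  "('l, 'n1) monoid_scheme \<Rightarrow> ('m, 'n2) monoid_scheme \<Rightarrow> ('n, 'n3) monoid_scheme \<Rightarrow> ('p, 'n4) monoid_scheme \<Rightarrow>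
   ('l \<Rightarrow> 'm) \<Rightarrow> ('l \<Rightarrow> 'n) \<Rightarrow> ('m \<Rightarrow> 'p) \<Rightarrow> ('n \<Rightarrow> 'p) \<Rightarrow>
   ('p \<Rightarrow> 'l \<Rightarrow> 'l) \<Rightarrow> ('p \<Rightarrow> 'm \<Rightarrow> 'm) \<Rightarrow> ('p \<Rightarrow> 'n \<Rightarrow> 'n) \<Rightarrow>
   ('m \<Rightarrow> 'n \<Rightarrow> 'l) \<Rightarrow> bool" where
  "crossed_square L M N P lam lam' \<mu> \<nu> actL actM actN h \<longleftrightarrow>
     group L \<and> group M \<and> group N \<and> group P \<and>
     lam \<in> hom L M \<and> lam' \<in> hom L N \<and> \<mu> \<in> hom M P \<and> \<nu> \<in> hom N P \<and>
     (\<forall>l \<in> carrier L. \<nu> (lam' l) = \<mu> (lam l)) \<and>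
     group_action P L actL \<and> group_action P M actM \<and> group_action P N actN \<and>
     (\<forall>m \<in> carrier M. \<forall>n \<in> carrier N. h m n \<in> carrier L) \<and>
     (\<forall>p \<in> carrier P. \<forall>l \<in> carrier L.
        lam (actL p l) = actM p (lam l) \<and> lam' (actL p l) = actN p (lam' l)) \<and>
     crossed_module M P actM \<mu> \<and> crossed_module N P actN \<nu> \<and>
     crossed_module L P actL (\<lambda>x. \<mu> (lam x)) \<and>
     (\<forall>m \<in> carrier M. \<forall>n \<in> carrier N.
        lam (h m n) = m \<otimes>\<^bsub>M\<^esub> actM (\<nu> n) (inv\<^bsub>M\<^esub> m) \<and>
        lam' (h m n) = actN (\<mu> m) n \<otimes>\<^bsub>N\<^esub> inv\<^bsub>N\<^esub> n) \<and>
     (\<forall>l \<in> carrier L. \<forall>n \<in> carrier N.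
        h (lam l) n = l \<otimes>\<^bsub>L\<^esub> actL (\<nu> n) (inv\<^bsub>L\<^esub> l)) \<and>
     (\<forall>m \<in> carrier M. \<forall>l \<in> carrier L.
        h m (lam' l) = actL (\<mu> m) l \<otimes>\<^bsub>L\<^esub> inv\<^bsub>L\<^esub> l) \<and>
     (\<forall>m \<in> carrier M. \<forall>m' \<in> carrier M. \<forall>n \<in> carrier N.
        h (m \<otimes>\<^bsub>M\<^esub> m') n = actL (\<mu> m) (h m' n) \<otimes>\<^bsub>L\<^esub> h m n) \<and>
     (\<forall>m \<in> carrier M. \<forall>n \<in> carrier N. \<forall>n' \<in> carrier N.
        h m (n \<otimes>\<^bsub>N\<^esub> n') = h m n \<otimes>\<^bsub>L\<^esub> actL (\<nu> n) (h m n')) \<and>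
     (\<forall>p \<in> carrier P. \<forall>m \<in> carrier M. \<forall>n \<in> carrier N.
        h (actM p m) (actN p n) = actL p (h m n))"

end

theory Submission
  imports Defs
begin

(* In an internal category in groups the composition is forced by the group structure: since m is
   a homomorphism on composable pairs, the unit laws give m(x, y) = x - 1_{s x} + y, and in particular
   ker s and ker t commute elementwise. Equivariance of m, applied to the pair (1_{t b}, b) acting on
   (l, 0) and to (b, 0) acting on (1_{t l}, l), shows that on ker s the action of b \<in> B_1 agrees with
   that of 1_{t b}, and that h(b, t l) = b\<cdot>l - l; commutation of ker s_B with ker t_B gives the same
   for conjugation on ker s_B. With these, each crossed-square axiom reduces to the crossed module
   axioms of C_1 and C_0 and the morphism laws of s, t and \<epsilon>. *)

lemma (in group) inv_m_cancel_left: "x \<in> carrier G \<Longrightarrow> y \<in> carrier G \<Longrightarrow> inv x \<otimes> (x \<otimes> y) = y"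
  by (simp add: m_assoc[symmetric])

lemma (in group) m_inv_cancel_left: "x \<in> carrier G \<Longrightarrow> y \<in> carrier G \<Longrightarrow> x \<otimes> (inv x \<otimes> y) = y"
  by (simp add: m_assoc[symmetric])

lemma group_action_group_hom:
  assumes "group_action B A act" and "b \<in> carrier B"
  shows "group_hom A A (act b)"
  using assms by (simp add: group_action_def group_hom_def group_hom_axioms_def)

lemma group_action_inv_cancel:
  assumes act: "group_action B A act" and b: "b \<in> carrier B" and a: "a \<in> carrier A"
  shows "act (inv\<^bsub>B\<^esub> b) (act b a) = a"
proof -
  interpret B: group B using act by (simp add: group_action_def)
  have "act (inv\<^bsub>B\<^esub> b) (act b a) = act (inv\<^bsub>B\<^esub> b \<otimes>\<^bsub>B\<^esub> b) a"
    using act b a unfolding group_action_def by (metis B.inv_closed)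
  also have "\<dots> = a" using act b a unfolding group_action_def by simp
  finally show ?thesis .
qed

lemma group_action_comap:
  assumes act: "group_action B A act" and f: "group_hom B' B f"
  shows "group_action B' A (\<lambda>b. act (f b))"
proof -
  interpret f: group_hom B' B f by (rule f)
  show ?thesis using act by (simp add: group_action_def)
qed

lemma (in group) group_action_conj: "group_action G G (\<lambda>g x. g \<otimes> x \<otimes> inv g)"
  unfolding group_action_def
proof (intro conjI ballI)
  fix g assume g: "g \<in> carrier G"
  show "(\<lambda>x. g \<otimes> x \<otimes> inv g) \<in> hom G G"
    using g by (auto simp: hom_def m_assoc inv_m_cancel_left)
  show "bij_betw (\<lambda>x. g \<otimes> x \<otimes> inv g) (carrier G) (carrier G)"
    by (rule bij_betw_byWitness[where f' = "\<lambda>x. inv g \<otimes> x \<otimes> g"])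
       (use g in \<open>auto simp: m_assoc inv_m_cancel_left m_inv_cancel_left\<close>)
qed (auto simp: m_assoc inv_mult_group is_group)

lemma group_action_restrict:
  assumes act: "group_action B A act" and H: "subgroup H A"
    and stable: "\<And>b h. b \<in> carrier B \<Longrightarrow> h \<in> H \<Longrightarrow> act b h \<in> H"
  shows "group_action B (A\<lparr>carrier := H\<rparr>) act"
  unfolding group_action_def
proof (intro conjI ballI)
  interpret B: group B using act by (simp add: group_action_def)
  interpret A: group A using act by (simp add: group_action_def)
  fix b assume b: "b \<in> carrier B"
  interpret act_b: group_hom A A "act b" by (rule group_action_group_hom[OF act b])
  show "act b \<in> hom (A\<lparr>carrier := H\<rparr>) (A\<lparr>carrier := H\<rparr>)"
    using b stable by (auto simp: hom_def subgroup.mem_carrier[OF H])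
  show "bij_betw (act b) (carrier (A\<lparr>carrier := H\<rparr>)) (carrier (A\<lparr>carrier := H\<rparr>))"
    by (rule bij_betw_byWitness[where f' = "act (inv\<^bsub>B\<^esub> b)"])
       (use b stable subgroup.subset[OF H] group_action_inv_cancel[OF act, of b]
          group_action_inv_cancel[OF act, of "inv\<^bsub>B\<^esub> b"] in auto)
qed (use act H in \<open>auto simp: group_action_def subgroup.subgroup_is_group subgroup.mem_carrier[OF H]\<close>)

lemma mem_kernel_iff [simp]: "x \<in> kernel G H f \<longleftrightarrow> x \<in> carrier G \<and> f x = \<one>\<^bsub>H\<^esub>"
  by (simp add: kernel_def)

locale internal_cat_group =
  G: group G + H: group H + s: group_hom G H s + t: group_hom G H t + e: group_hom H G e
  for G :: "('a, 'n) monoid_scheme" (structure) and H :: "('c, 'o) monoid_scheme"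
    and s t :: "'a \<Rightarrow> 'c" and e :: "'c \<Rightarrow> 'a" +
  fixes m :: "'a \<times> 'a \<Rightarrow> 'a"
  assumes comp_hom: "m \<in> hom (pb_group G s t) G"
    and source_unit: "\<And>x. x \<in> carrier H \<Longrightarrow> s (e x) = x"
    and target_unit: "\<And>x. x \<in> carrier H \<Longrightarrow> t (e x) = x"
    and comp_unit_left: "\<And>x. x \<in> carrier G \<Longrightarrow> m (e (t x), x) = x"
    and comp_unit_right: "\<And>x. x \<in> carrier G \<Longrightarrow> m (x, e (s x)) = x"
begin

lemma composable_iff:
  "(x, y) \<in> carrier (pb_group G s t) \<longleftrightarrow> x \<in> carrier G \<and> y \<in> carrier G \<and> s x = t y"
  by (simp add: pb_group_def)

lemma comp_mult:
  assumes "(x, y) \<in> carrier (pb_group G s t)" and "(x', y') \<in> carrier (pb_group G s t)"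
  shows "m (x \<otimes> x', y \<otimes> y') = m (x, y) \<otimes> m (x', y')"
  using comp_hom assms unfolding hom_def pb_group_def by (auto simp: Pi_def)

lemma comp_one_right: "x \<in> carrier G \<Longrightarrow> s x = \<one>\<^bsub>H\<^esub> \<Longrightarrow> m (x, \<one>) = x"
  using comp_unit_right[of x] by simp

lemma comp_one_left: "y \<in> carrier G \<Longrightarrow> t y = \<one>\<^bsub>H\<^esub> \<Longrightarrow> m (\<one>, y) = y"
  using comp_unit_left[of y] by simp

lemma comp_eq:
  assumes x: "x \<in> carrier G" and y: "y \<in> carrier G" and xy: "s x = t y"
  shows "m (x, y) = x \<otimes> inv (e (s x)) \<otimes> y"
proof -
  define u where "u = x \<otimes> inv (e (s x))"
  have u: "u \<in> carrier G" "s u = \<one>\<^bsub>H\<^esub>" using x by (simp_all add: u_def source_unit)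
  have "m (x, y) = m (u \<otimes> e (s x), \<one> \<otimes> y)"
    using x y by (simp add: u_def G.m_assoc)
  also have "\<dots> = m (u, \<one>) \<otimes> m (e (s x), y)"
    using u x y xy by (intro comp_mult) (simp_all add: composable_iff source_unit)
  also have "\<dots> = u \<otimes> y"
    using u x y xy comp_unit_left[of y] by (simp add: comp_one_right)
  finally show ?thesis by (simp add: u_def)
qed

lemma ker_source_ker_target_commute:
  assumes a: "a \<in> carrier G" "s a = \<one>\<^bsub>H\<^esub>" and b: "b \<in> carrier G" "t b = \<one>\<^bsub>H\<^esub>"
  shows "a \<otimes> b = b \<otimes> a"
proof -
  have ab: "(a, \<one>) \<in> carrier (pb_group G s t)" "(\<one>, b) \<in> carrier (pb_group G s t)"
    using a b by (simp_all add: composable_iff)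
  have "a \<otimes> b = m (a \<otimes> \<one>, \<one> \<otimes> b)"
    using a b comp_one_right comp_one_left comp_mult[OF ab] by simp
  also have "\<dots> = m (\<one> \<otimes> a, b \<otimes> \<one>)" using a b by simp
  also have "\<dots> = b \<otimes> a"
    using a b comp_one_right comp_one_left comp_mult[OF ab(2,1)] by simp
  finally show ?thesis .
qed

end

locale xmod_internal_cat =
  fixes A1 :: "('a, 'n1) monoid_scheme" and B1 :: "('b, 'n2) monoid_scheme"
    and A0 :: "('c, 'n3) monoid_scheme" and B0 :: "('d, 'n4) monoid_scheme"
    and act1 :: "'b \<Rightarrow> 'a \<Rightarrow> 'a" and \<alpha>1 :: "'a \<Rightarrow> 'b"
    and act0 :: "'d \<Rightarrow> 'c \<Rightarrow> 'c" and \<alpha>0 :: "'c \<Rightarrow> 'd"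
    and sA tA :: "'a \<Rightarrow> 'c" and sB tB :: "'b \<Rightarrow> 'd"
    and eA :: "'c \<Rightarrow> 'a" and eB :: "'d \<Rightarrow> 'b"
    and mA :: "'a \<times> 'a \<Rightarrow> 'a" and mB :: "'b \<times> 'b \<Rightarrow> 'b"
  assumes internal_cat: "internal_cat_xmod A1 B1 act1 \<alpha>1 A0 B0 act0 \<alpha>0 sA sB tA tB eA eB mA mB"
begin

lemma crossed_module_1: "crossed_module A1 B1 act1 \<alpha>1"
  and crossed_module_0: "crossed_module A0 B0 act0 \<alpha>0"
  and morphism_source: "xmod_morphism A1 B1 act1 \<alpha>1 A0 B0 act0 \<alpha>0 sA sB"
  and morphism_target: "xmod_morphism A1 B1 act1 \<alpha>1 A0 B0 act0 \<alpha>0 tA tB"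
  and morphism_unit: "xmod_morphism A0 B0 act0 \<alpha>0 A1 B1 act1 \<alpha>1 eA eB"
  and morphism_comp: "xmod_morphism (pb_group A1 sA tA) (pb_group B1 sB tB) (pb_act act1) (pb_map \<alpha>1)
                        A1 B1 act1 \<alpha>1 mA mB"
  using internal_cat unfolding internal_cat_xmod_def by blast+

lemma action_1: "group_action B1 A1 act1" and action_0: "group_action B0 A0 act0"
  using crossed_module_1 crossed_module_0 by (simp_all add: crossed_module_def)

sublocale A1: group A1 using action_1 by (simp add: group_action_def)
sublocale B1: group B1 using action_1 by (simp add: group_action_def)
sublocale A0: group A0 using action_0 by (simp add: group_action_def)
sublocale B0: group B0 using action_0 by (simp add: group_action_def)

sublocale A: internal_cat_group A1 A0 sA tA eA mA
  using internal_cat A1.is_group A0.is_group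
  unfolding internal_cat_xmod_def xmod_morphism_def
  by unfold_locales (auto simp: group_hom_def group_hom_axioms_def)

sublocale B: internal_cat_group B1 B0 sB tB eB mB
  using internal_cat B1.is_group B0.is_group
  unfolding internal_cat_xmod_def xmod_morphism_def
  by unfold_locales (auto simp: group_hom_def group_hom_axioms_def)

sublocale \<alpha>1: group_hom A1 B1 \<alpha>1
  using crossed_module_1 by unfold_locales (simp add: crossed_module_def)

sublocale \<alpha>0: group_hom A0 B0 \<alpha>0
  using crossed_module_0 by unfold_locales (simp add: crossed_module_def)

lemma act1_group_hom: "b \<in> carrier B1 \<Longrightarrow> group_hom A1 A1 (act1 b)"
  by (rule group_action_group_hom[OF action_1])

lemma act1_closed [simp]: "b \<in> carrier B1 \<Longrightarrow> a \<in> carrier A1 \<Longrightarrow> act1 b a \<in> carrier A1"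
  using group_hom.hom_closed[OF act1_group_hom] .

lemma act1_one [simp]: "b \<in> carrier B1 \<Longrightarrow> act1 b \<one>\<^bsub>A1\<^esub> = \<one>\<^bsub>A1\<^esub>"
  using group_hom.hom_one[OF act1_group_hom] .

lemma act1_mult:
  "b \<in> carrier B1 \<Longrightarrow> a \<in> carrier A1 \<Longrightarrow> a' \<in> carrier A1 \<Longrightarrow>
    act1 b (a \<otimes>\<^bsub>A1\<^esub> a') = act1 b a \<otimes>\<^bsub>A1\<^esub> act1 b a'"
  using group_hom.hom_mult[OF act1_group_hom] .

lemma act1_inv: "b \<in> carrier B1 \<Longrightarrow> a \<in> carrier A1 \<Longrightarrow> act1 b (inv\<^bsub>A1\<^esub> a) = inv\<^bsub>A1\<^esub> (act1 b a)"
  using group_hom.hom_inv[OF act1_group_hom] .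

lemma one_act1 [simp]: "a \<in> carrier A1 \<Longrightarrow> act1 \<one>\<^bsub>B1\<^esub> a = a"
  using action_1 by (simp add: group_action_def)

lemma act1_act1:
  "b \<in> carrier B1 \<Longrightarrow> b' \<in> carrier B1 \<Longrightarrow> a \<in> carrier A1 \<Longrightarrow>
    act1 (b \<otimes>\<^bsub>B1\<^esub> b') a = act1 b (act1 b' a)"
  using action_1 by (simp add: group_action_def)

lemma act0_one [simp]: "p \<in> carrier B0 \<Longrightarrow> act0 p \<one>\<^bsub>A0\<^esub> = \<one>\<^bsub>A0\<^esub>"
  using group_hom.hom_one[OF group_action_group_hom[OF action_0]] .

lemma one_act0 [simp]: "n \<in> carrier A0 \<Longrightarrow> act0 \<one>\<^bsub>B0\<^esub> n = n"
  using action_0 by (simp add: group_action_def)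

lemma alpha1_act1:
  "b \<in> carrier B1 \<Longrightarrow> a \<in> carrier A1 \<Longrightarrow> \<alpha>1 (act1 b a) = b \<otimes>\<^bsub>B1\<^esub> \<alpha>1 a \<otimes>\<^bsub>B1\<^esub> inv\<^bsub>B1\<^esub> b"
  using crossed_module_1 by (simp add: crossed_module_def)

lemma act1_alpha1:
  "a \<in> carrier A1 \<Longrightarrow> a' \<in> carrier A1 \<Longrightarrow> act1 (\<alpha>1 a) a' = a \<otimes>\<^bsub>A1\<^esub> a' \<otimes>\<^bsub>A1\<^esub> inv\<^bsub>A1\<^esub> a"
  using crossed_module_1 by (simp add: crossed_module_def)

lemma sB_alpha1: "a \<in> carrier A1 \<Longrightarrow> sB (\<alpha>1 a) = \<alpha>0 (sA a)"
  and tB_alpha1: "a \<in> carrier A1 \<Longrightarrow> tB (\<alpha>1 a) = \<alpha>0 (tA a)"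
  and eB_alpha0: "n \<in> carrier A0 \<Longrightarrow> eB (\<alpha>0 n) = \<alpha>1 (eA n)"
  using morphism_source morphism_target morphism_unit by (simp_all add: xmod_morphism_def)

lemma sA_act1: "b \<in> carrier B1 \<Longrightarrow> a \<in> carrier A1 \<Longrightarrow> sA (act1 b a) = act0 (sB b) (sA a)"
  and tA_act1: "b \<in> carrier B1 \<Longrightarrow> a \<in> carrier A1 \<Longrightarrow> tA (act1 b a) = act0 (tB b) (tA a)"
  and eA_act0: "p \<in> carrier B0 \<Longrightarrow> n \<in> carrier A0 \<Longrightarrow> eA (act0 p n) = act1 (eB p) (eA n)"
  using morphism_source morphism_target morphism_unit by (simp_all add: xmod_morphism_def)

lemma mA_act1:
  assumes "(b, b') \<in> carrier (pb_group B1 sB tB)" and "(a, a') \<in> carrier (pb_group A1 sA tA)"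
  shows "mA (act1 b a, act1 b' a') = act1 (mB (b, b')) (mA (a, a'))"
  using morphism_comp assms unfolding xmod_morphism_def pb_act_def by fastforce

lemma act1_unit_target:
  assumes b: "b \<in> carrier B1" and l: "l \<in> carrier A1" "sA l = \<one>\<^bsub>A0\<^esub>"
  shows "act1 (eB (tB b)) l = act1 b l"
proof -
  have "(eB (tB b), b) \<in> carrier (pb_group B1 sB tB)"
    using b by (simp add: B.composable_iff B.source_unit)
  moreover have "(l, \<one>\<^bsub>A1\<^esub>) \<in> carrier (pb_group A1 sA tA)"
    using l by (simp add: A.composable_iff)
  ultimately have "mA (act1 (eB (tB b)) l, act1 b \<one>\<^bsub>A1\<^esub>) = act1 (mB (eB (tB b), b)) (mA (l, \<one>\<^bsub>A1\<^esub>))"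
    by (rule mA_act1)
  then show ?thesis
    using b l by (simp add: B.comp_unit_left A.comp_one_right sA_act1 B.source_unit)
qed

lemma conj_unit_target:
  assumes b: "b \<in> carrier B1" and x: "x \<in> carrier B1" "sB x = \<one>\<^bsub>B0\<^esub>"
  shows "eB (tB b) \<otimes>\<^bsub>B1\<^esub> x \<otimes>\<^bsub>B1\<^esub> inv\<^bsub>B1\<^esub> (eB (tB b)) = b \<otimes>\<^bsub>B1\<^esub> x \<otimes>\<^bsub>B1\<^esub> inv\<^bsub>B1\<^esub> b"
proof -
  \<comment> \<open>b = c \<cdot> 1_{t b} with c \<in> ker t, and c commutes with ker s\<close>
  define u where "u = eB (tB b)"
  define c where "c = b \<otimes>\<^bsub>B1\<^esub> inv\<^bsub>B1\<^esub> u"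
  define y where "y = u \<otimes>\<^bsub>B1\<^esub> x \<otimes>\<^bsub>B1\<^esub> inv\<^bsub>B1\<^esub> u"
  have u: "u \<in> carrier B1" and c: "c \<in> carrier B1" "tB c = \<one>\<^bsub>B0\<^esub>"
    and y: "y \<in> carrier B1" "sB y = \<one>\<^bsub>B0\<^esub>"
    using b x by (simp_all add: u_def c_def y_def B.source_unit B.target_unit)
  have "b \<otimes>\<^bsub>B1\<^esub> x \<otimes>\<^bsub>B1\<^esub> inv\<^bsub>B1\<^esub> b = c \<otimes>\<^bsub>B1\<^esub> y \<otimes>\<^bsub>B1\<^esub> inv\<^bsub>B1\<^esub> c"
    using b x u by (simp add: c_def y_def B1.m_assoc B1.inv_mult_group B1.inv_m_cancel_left)
  also have "\<dots> = y \<otimes>\<^bsub>B1\<^esub> c \<otimes>\<^bsub>B1\<^esub> inv\<^bsub>B1\<^esub> c"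
    using B.ker_source_ker_target_commute[OF y c] by simp
  also have "\<dots> = y"
    using c y by (simp add: B1.m_assoc)
  finally show ?thesis by (simp add: y_def u_def)
qed

abbreviation L :: "('a, 'n1) monoid_scheme" where "L \<equiv> A1\<lparr>carrier := kernel A1 A0 sA\<rparr>"
abbreviation M :: "('b, 'n2) monoid_scheme" where "M \<equiv> B1\<lparr>carrier := kernel B1 B0 sB\<rparr>"
abbreviation actL :: "'d \<Rightarrow> 'a \<Rightarrow> 'a" where "actL \<equiv> \<lambda>p l. act1 (eB p) l"
abbreviation actM :: "'d \<Rightarrow> 'b \<Rightarrow> 'b"
  where "actM \<equiv> \<lambda>p m. eB p \<otimes>\<^bsub>B1\<^esub> m \<otimes>\<^bsub>B1\<^esub> inv\<^bsub>B1\<^esub> (eB p)"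
abbreviation h :: "'b \<Rightarrow> 'c \<Rightarrow> 'a"
  where "h \<equiv> \<lambda>m n. act1 m (eA n) \<otimes>\<^bsub>A1\<^esub> inv\<^bsub>A1\<^esub> (eA n)"

lemma group_L: "group L" and inv_L [simp]: "l \<in> carrier L \<Longrightarrow> inv\<^bsub>L\<^esub> l = inv\<^bsub>A1\<^esub> l"
  using A.s.subgroup_kernel by (auto intro: subgroup.subgroup_is_group A1.is_group)

lemma group_M: "group M" and inv_M [simp]: "m \<in> carrier M \<Longrightarrow> inv\<^bsub>M\<^esub> m = inv\<^bsub>B1\<^esub> m"
  using B.s.subgroup_kernel by (auto intro: subgroup.subgroup_is_group B1.is_group)

lemma group_hom_eB: "group_hom B0 B1 eB"
  by (simp add: group_hom_def group_hom_axioms_def B0.is_group B1.is_group)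

lemma group_action_L: "group_action B0 L actL"
proof (rule group_action_restrict)
  show "group_action B0 A1 (\<lambda>p. act1 (eB p))"
    by (rule group_action_comap[OF action_1 group_hom_eB])
  show "subgroup (kernel A1 A0 sA) A1"
    by (rule A.s.subgroup_kernel)
  show "act1 (eB p) l \<in> kernel A1 A0 sA" if "p \<in> carrier B0" "l \<in> kernel A1 A0 sA" for p l
    using that by (simp add: sA_act1 B.source_unit)
qed

lemma group_action_M: "group_action B0 M actM"
proof (rule group_action_restrict)
  show "group_action B0 B1 (\<lambda>p. actM p)"
    by (rule group_action_comap[OF B1.group_action_conj group_hom_eB])
  show "subgroup (kernel B1 B0 sB) B1"
    by (rule B.s.subgroup_kernel)
  show "actM p m \<in> kernel B1 B0 sB" if "p \<in> carrier B0" "m \<in> kernel B1 B0 sB" for p m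
    using that by (simp add: B.source_unit)
qed

lemma crossed_module_M: "crossed_module M B0 actM tB"
  unfolding crossed_module_def
proof (intro conjI ballI)
  show "group_action B0 M actM" by (rule group_action_M)
  show "tB \<in> hom M B0" by (auto simp: hom_def)
  show "tB (actM p m) = p \<otimes>\<^bsub>B0\<^esub> tB m \<otimes>\<^bsub>B0\<^esub> inv\<^bsub>B0\<^esub> p" if "p \<in> carrier B0" "m \<in> carrier M" for p m
    using that by (simp add: B.target_unit)
  show "actM (tB m) m' = m \<otimes>\<^bsub>M\<^esub> m' \<otimes>\<^bsub>M\<^esub> inv\<^bsub>M\<^esub> m" if "m \<in> carrier M" "m' \<in> carrier M" for m m'
    using that by (simp add: conj_unit_target)
qed

lemma crossed_module_L: "crossed_module L B0 actL (\<lambda>l. tB (\<alpha>1 l))"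
  unfolding crossed_module_def
proof (intro conjI ballI)
  show "group_action B0 L actL" by (rule group_action_L)
  show "(\<lambda>l. tB (\<alpha>1 l)) \<in> hom L B0" by (auto simp: hom_def)
  show "tB (\<alpha>1 (actL p l)) = p \<otimes>\<^bsub>B0\<^esub> tB (\<alpha>1 l) \<otimes>\<^bsub>B0\<^esub> inv\<^bsub>B0\<^esub> p"
    if "p \<in> carrier B0" "l \<in> carrier L" for p l
    using that by (simp add: alpha1_act1 B.target_unit)
  show "actL (tB (\<alpha>1 l)) l' = l \<otimes>\<^bsub>L\<^esub> l' \<otimes>\<^bsub>L\<^esub> inv\<^bsub>L\<^esub> l" if "l \<in> carrier L" "l' \<in> carrier L" for l l'
    using that by (simp add: act1_unit_target act1_alpha1)
qed

lemma h_closed: "m \<in> carrier M \<Longrightarrow> n \<in> carrier A0 \<Longrightarrow> h m n \<in> carrier L"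
  by (simp add: sA_act1 A.source_unit)

lemma alpha1_h:
  "m \<in> carrier B1 \<Longrightarrow> n \<in> carrier A0 \<Longrightarrow> \<alpha>1 (h m n) = m \<otimes>\<^bsub>B1\<^esub> actM (\<alpha>0 n) (inv\<^bsub>B1\<^esub> m)"
  by (simp add: alpha1_act1 eB_alpha0 B1.m_assoc)

lemma tA_h: "m \<in> carrier B1 \<Longrightarrow> n \<in> carrier A0 \<Longrightarrow> tA (h m n) = act0 (tB m) n \<otimes>\<^bsub>A0\<^esub> inv\<^bsub>A0\<^esub> n"
  by (simp add: tA_act1 A.target_unit)

lemma h_alpha1:
  "l \<in> carrier A1 \<Longrightarrow> n \<in> carrier A0 \<Longrightarrow> h (\<alpha>1 l) n = l \<otimes>\<^bsub>A1\<^esub> actL (\<alpha>0 n) (inv\<^bsub>A1\<^esub> l)"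
  by (simp add: eB_alpha0 act1_alpha1 A1.m_assoc)

lemma h_tA:
  assumes m: "m \<in> carrier B1" "sB m = \<one>\<^bsub>B0\<^esub>" and l: "l \<in> carrier A1"
  shows "h m (tA l) = act1 m l \<otimes>\<^bsub>A1\<^esub> inv\<^bsub>A1\<^esub> l"
proof -
  have "(m, \<one>\<^bsub>B1\<^esub>) \<in> carrier (pb_group B1 sB tB)"
    using m by (simp add: B.composable_iff)
  moreover have "(eA (tA l), l) \<in> carrier (pb_group A1 sA tA)"
    using l by (simp add: A.composable_iff A.source_unit)
  ultimately have "mA (act1 m (eA (tA l)), act1 \<one>\<^bsub>B1\<^esub> l) = act1 (mB (m, \<one>\<^bsub>B1\<^esub>)) (mA (eA (tA l), l))"
    by (rule mA_act1)
  then have "act1 m (eA (tA l)) \<otimes>\<^bsub>A1\<^esub> inv\<^bsub>A1\<^esub> (eA (tA l)) \<otimes>\<^bsub>A1\<^esub> l = act1 m l"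
    using m l by (simp add: A.comp_eq A.comp_unit_left B.comp_one_right sA_act1 tA_act1 A.source_unit)
  then show ?thesis
    using m l by (simp add: A1.inv_solve_right)
qed

lemma h_mult_left:
  assumes m: "m \<in> carrier B1" and m': "m' \<in> carrier M" and n: "n \<in> carrier A0"
  shows "h (m \<otimes>\<^bsub>B1\<^esub> m') n = actL (tB m) (h m' n) \<otimes>\<^bsub>A1\<^esub> h m n"
proof -
  have "actL (tB m) (h m' n) = act1 m (h m' n)"
    using m h_closed[OF m' n] by (simp add: act1_unit_target)
  then show ?thesis
    using m m' n by (simp add: act1_act1 act1_mult act1_inv A1.m_assoc A1.inv_m_cancel_left)
qed

lemma h_mult_right:
  assumes m: "m \<in> carrier B1" and n: "n \<in> carrier A0" "n' \<in> carrier A0"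
  shows "h m (n \<otimes>\<^bsub>A0\<^esub> n') = h m n \<otimes>\<^bsub>A1\<^esub> actL (\<alpha>0 n) (h m n')"
  using m n
  by (simp add: eB_alpha0 act1_alpha1 act1_mult A1.m_assoc A1.inv_mult_group A1.inv_m_cancel_left)

lemma h_equivariant:
  assumes p: "p \<in> carrier B0" and m: "m \<in> carrier B1" and n: "n \<in> carrier A0"
  shows "h (actM p m) (act0 p n) = actL p (h m n)"
  using p m n
  by (simp add: eA_act0 act1_act1[symmetric] act1_mult act1_inv B1.m_assoc)

theorem crossed_square: "crossed_square L M A0 B0 \<alpha>1 tA tB \<alpha>0 actL actM act0 h"
  unfolding crossed_square_def
proof (intro conjI ballI)
  show "\<alpha>1 \<in> hom L M" "tA \<in> hom L A0" "tB \<in> hom M B0"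
    by (auto simp: hom_def sB_alpha1)
  show "\<alpha>1 (actL p l) = actM p (\<alpha>1 l)" "tA (actL p l) = act0 p (tA l)"
    if "p \<in> carrier B0" "l \<in> carrier L" for p l
    using that by (simp_all add: alpha1_act1 tA_act1 B.target_unit)
  show "h (\<alpha>1 l) n = l \<otimes>\<^bsub>L\<^esub> actL (\<alpha>0 n) (inv\<^bsub>L\<^esub> l)"
    if "l \<in> carrier L" "n \<in> carrier A0" for l n
    using that h_alpha1 by simp
  show "h m (tA l) = actL (tB m) l \<otimes>\<^bsub>L\<^esub> inv\<^bsub>L\<^esub> l"
    if "m \<in> carrier M" "l \<in> carrier L" for m l
    using that h_tA act1_unit_target by simp
  show "h m n \<in> carrier L" if "m \<in> carrier M" "n \<in> carrier A0" for m n
    using that h_closed by blast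
  show "\<alpha>1 (h m n) = m \<otimes>\<^bsub>M\<^esub> actM (\<alpha>0 n) (inv\<^bsub>M\<^esub> m)"
    "tA (h m n) = act0 (tB m) n \<otimes>\<^bsub>A0\<^esub> inv\<^bsub>A0\<^esub> n"
    if "m \<in> carrier M" "n \<in> carrier A0" for m n
    using that alpha1_h[of m n] tA_h[of m n] by simp_all
  show "h m (n \<otimes>\<^bsub>A0\<^esub> n') = h m n \<otimes>\<^bsub>L\<^esub> actL (\<alpha>0 n) (h m n')"
    if "m \<in> carrier M" "n \<in> carrier A0" "n' \<in> carrier A0" for m n n'
    using that h_mult_right[of m n n'] by simp
qed (simp_all add: group_L group_M group_action_L group_action_M action_0 crossed_module_M
       crossed_module_0 crossed_module_L tB_alpha1 h_mult_left h_equivariant)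

end

theorem mainTheorem2:
  fixes A1 :: "'a monoid" and B1 :: "'b monoid" and A0 :: "'c monoid" and B0 :: "'d monoid"
    and act1 :: "'b \<Rightarrow> 'a \<Rightarrow> 'a" and \<alpha>1 :: "'a \<Rightarrow> 'b"
    and act0 :: "'d \<Rightarrow> 'c \<Rightarrow> 'c" and \<alpha>0 :: "'c \<Rightarrow> 'd"
    and sA tA :: "'a \<Rightarrow> 'c" and sB tB :: "'b \<Rightarrow> 'd"
    and eA :: "'c \<Rightarrow> 'a" and eB :: "'d \<Rightarrow> 'b"
    and mA :: "'a \<times> 'a \<Rightarrow> 'a" and mB :: "'b \<times> 'b \<Rightarrow> 'b"
  assumes "internal_cat_xmod A1 B1 act1 \<alpha>1 A0 B0 act0 \<alpha>0 sA sB tA tB eA eB mA mB"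
  shows "crossed_square
           (A1\<lparr>carrier := kernel A1 A0 sA\<rparr>) (B1\<lparr>carrier := kernel B1 B0 sB\<rparr>) A0 B0
           \<alpha>1 tA tB \<alpha>0
           (\<lambda>p l. act1 (eB p) l)
           (\<lambda>p m. eB p \<otimes>\<^bsub>B1\<^esub> m \<otimes>\<^bsub>B1\<^esub> inv\<^bsub>B1\<^esub> (eB p))
           act0
           (\<lambda>m n. act1 m (eA n) \<otimes>\<^bsub>A1\<^esub> inv\<^bsub>A1\<^esub> (eA n))"
  using xmod_internal_cat.crossed_square[OF xmod_internal_cat.intro[OF assms]] .

end
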